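(* Let $\Delta$ be a thick spherical building with a chosen point $n\in\Delta$, let $\sigma$ be a simplex of $\Delta$ and $C$ a chamber containing $\sigma$. Then $\sigma$ lies in the horizontal part $\Delta^h$ if and only if every vertex $v$ of $C$ for which there is a path in the Coxeter diagram of $\Delta$ from the type of $v$ to the type of some vertex of $\sigma$ is equatorial.
   Context: $\Delta$ carries the CAT(1) angular metric $d$ (apartments are unit spheres). A point $x$ is equatorial if $d(n,x)=\pi/2$; a simplex is equatorial if all its points are. $\Delta$ decomposes as a spherical join $\ast_i\Delta_i$ of irreducible spherical buildings; the horizontal part $\Delta^h$ is the join of those factors $\Delta_i$ consisting entirely of equatorial points, and the vertical part $\Delta^v$ is the join of the remaining factors. Paths in the Coxeter diagram include the trivial path. *)

theory Defs
  imports "HOL-Analysis.Analysis"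
begin

text \<open>
Spherical buildings are encoded via the W-metric (Weyl distance) definition of
Abramenko--Brown, Def. 5.1, over a finite (spherical) Coxeter system given by its
geometric (reflection) representation: unit simple roots alpha s (s ranging over
the finite type set 's) forming a basis of real^'n with
alpha s . alpha t = - cos (pi / m s t), where m is the Coxeter matrix.
\<close>

definition refl :: "real^'n \<Rightarrow> real^'n \<Rightarrow> real^'n" where
  "refl a x = x - (2 * (x \<bullet> a)) *\<^sub>R a"

definition coxeter_roots :: "('s::finite \<Rightarrow> real^'n) \<Rightarrow> ('s \<Rightarrow> 's \<Rightarrow> nat) \<Rightarrow> bool" where
  "coxeter_roots \<alpha> m \<longleftrightarrow>
     (\<forall>s. norm (\<alpha> s) = 1) \<and> (\<forall>s. m s s = 1) \<and> (\<forall>s t. m s t = m t s) \<and>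
     (\<forall>s t. s \<noteq> t \<longrightarrow> m s t \<ge> 2) \<and>
     (\<forall>s t. \<alpha> s \<bullet> \<alpha> t = - cos (pi / real (m s t))) \<and>
     inj \<alpha> \<and> independent (range \<alpha>) \<and> span (range \<alpha>) = UNIV"

definition wprod :: "('s \<Rightarrow> real^'n) \<Rightarrow> 's list \<Rightarrow> (real^'n \<Rightarrow> real^'n)" where
  "wprod \<alpha> ws = foldr (\<lambda>s f. refl (\<alpha> s) \<circ> f) ws id"

definition Wgrp :: "('s \<Rightarrow> real^'n) \<Rightarrow> (real^'n \<Rightarrow> real^'n) set" where
  "Wgrp \<alpha> = range (wprod \<alpha>)"

definition wlen :: "('s \<Rightarrow> real^'n) \<Rightarrow> (real^'n \<Rightarrow> real^'n) \<Rightarrow> nat" where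
  "wlen \<alpha> w = (LEAST k. \<exists>ws. length ws = k \<and> wprod \<alpha> ws = w)"

definition is_W_building ::
  "('s \<Rightarrow> real^'n) \<Rightarrow> ('c \<Rightarrow> 'c \<Rightarrow> (real^'n \<Rightarrow> real^'n)) \<Rightarrow> bool" where
  "is_W_building \<alpha> \<delta> \<longleftrightarrow>
     (\<forall>C D. \<delta> C D \<in> Wgrp \<alpha>) \<and>
     (\<forall>C D. \<delta> C D = id \<longleftrightarrow> C = D) \<and>
     (\<forall>C D C' s. \<delta> C' C = refl (\<alpha> s) \<longrightarrow>
        (\<delta> C' D = refl (\<alpha> s) \<circ> \<delta> C D \<or> \<delta> C' D = \<delta> C D) \<and>
        (wlen \<alpha> (refl (\<alpha> s) \<circ> \<delta> C D) = wlen \<alpha> (\<delta> C D) + 1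
           \<longrightarrow> \<delta> C' D = refl (\<alpha> s) \<circ> \<delta> C D)) \<and>
     (\<forall>C D s. \<exists>C'. \<delta> C' C = refl (\<alpha> s) \<and> \<delta> C' D = refl (\<alpha> s) \<circ> \<delta> C D)"

text \<open>Thick: every panel contains at least three chambers.\<close>
definition thick ::
  "('s \<Rightarrow> real^'n) \<Rightarrow> ('c \<Rightarrow> 'c \<Rightarrow> (real^'n \<Rightarrow> real^'n)) \<Rightarrow> bool" where
  "thick \<alpha> \<delta> \<longleftrightarrow>
     (\<forall>C s. \<exists>D D'. D \<noteq> D' \<and> \<delta> C D = refl (\<alpha> s) \<and> \<delta> C D' = refl (\<alpha> s))"

text \<open>Closed fundamental chamber K of the Coxeter sphere.\<close>
definition fund :: "('s \<Rightarrow> real^'n) \<Rightarrow> real^'n \<Rightarrow> bool" where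
  "fund \<alpha> x \<longleftrightarrow> norm x = 1 \<and> (\<forall>s. 0 \<le> x \<bullet> \<alpha> s)"

text \<open>Points of the geometric realisation are represented by pairs (C, x) with x in K
  (the point x of chamber C); the angular metric is computed in an apartment
  containing C and D, identified with the Coxeter sphere so that C goes to K and D
  to delta C D applied to K.\<close>
definition angd ::
  "('c \<Rightarrow> 'c \<Rightarrow> (real^'n \<Rightarrow> real^'n)) \<Rightarrow> ('c \<times> (real^'n)) \<Rightarrow> ('c \<times> (real^'n)) \<Rightarrow> real" where
  "angd \<delta> p q = arccos (snd p \<bullet> \<delta> (fst p) (fst q) (snd q))"

definition equatorial ::
  "('c \<Rightarrow> 'c \<Rightarrow> (real^'n \<Rightarrow> real^'n)) \<Rightarrow> ('c \<times> (real^'n)) \<Rightarrow> ('c \<times> (real^'n)) \<Rightarrow> bool" where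
  "equatorial \<delta> n p \<longleftrightarrow> angd \<delta> n p = pi / 2"

text \<open>Points of the face of type T of chamber C (the simplex spanned by the vertices
  of C whose types lie in T).\<close>
definition face_pts :: "('s \<Rightarrow> real^'n) \<Rightarrow> 'c \<Rightarrow> 's set \<Rightarrow> ('c \<times> (real^'n)) set" where
  "face_pts \<alpha> C T = {(C, x) | x. fund \<alpha> x \<and> (\<forall>t. t \<notin> T \<longrightarrow> x \<bullet> \<alpha> t = 0)}"

text \<open>Points of the subcomplex consisting of all simplices with vertex types in J
  (for J a connected component of the diagram this is an irreducible join factor;
   for a union of components it is the join of those factors).\<close>
definition part_pts :: "('s \<Rightarrow> real^'n) \<Rightarrow> 's set \<Rightarrow> ('c \<times> (real^'n)) set" where
  "part_pts \<alpha> J = {(C, x) | C x. fund \<alpha> x \<and> (\<forall>t. t \<notin> J \<longrightarrow> x \<bullet> \<alpha> t = 0)}"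

definition vertex :: "('s \<Rightarrow> real^'n) \<Rightarrow> 'c \<Rightarrow> 's \<Rightarrow> ('c \<times> (real^'n))" where
  "vertex \<alpha> C s = (C, THE x. fund \<alpha> x \<and> (\<forall>t. t \<noteq> s \<longrightarrow> x \<bullet> \<alpha> t = 0))"

definition cox_edge :: "('s \<Rightarrow> 's \<Rightarrow> nat) \<Rightarrow> 's \<Rightarrow> 's \<Rightarrow> bool" where
  "cox_edge m s t \<longleftrightarrow> s \<noteq> t \<and> m s t \<ge> 3"

definition cox_path :: "('s \<Rightarrow> 's \<Rightarrow> nat) \<Rightarrow> 's \<Rightarrow> 's \<Rightarrow> bool" where
  "cox_path m = (cox_edge m)\<^sup>*\<^sup>*"

text \<open>Types belonging to irreducible factors consisting entirely of equatorial points.\<close>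
definition horiz_types ::
  "('s \<Rightarrow> real^'n) \<Rightarrow> ('s \<Rightarrow> 's \<Rightarrow> nat) \<Rightarrow> ('c \<Rightarrow> 'c \<Rightarrow> (real^'n \<Rightarrow> real^'n))
     \<Rightarrow> ('c \<times> (real^'n)) \<Rightarrow> 's set" where
  "horiz_types \<alpha> m \<delta> n =
     \<Union>{ {u. cox_path m s u} | s.
         \<forall>p \<in> (part_pts \<alpha> {u. cox_path m s u} :: ('c \<times> (real^'n)) set). equatorial \<delta> n p}"

definition horizontal_part ::
  "('s \<Rightarrow> real^'n) \<Rightarrow> ('s \<Rightarrow> 's \<Rightarrow> nat) \<Rightarrow> ('c \<Rightarrow> 'c \<Rightarrow> (real^'n \<Rightarrow> real^'n))
     \<Rightarrow> ('c \<times> (real^'n)) \<Rightarrow> ('c \<times> (real^'n)) set" where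
  "horizontal_part \<alpha> m \<delta> n = part_pts \<alpha> (horiz_types \<alpha> m \<delta> n)"

end

theory Submission
  imports Defs
begin

(* Realise the Coxeter sphere in real^'n with simple roots alpha s.  The vertex
   of type v of the fundamental chamber K is the unit fundamental weight "weight v", which is
   orthogonal to every other simple root; every vector supported on a type set J (orthogonal
   to alpha t for t outside J) is a linear combination of the weights of the types in J.
   Roots lying in different components of the Coxeter diagram are orthogonal, so the
   reflection group W preserves the vectors supported on a diagram component.  Since the
   point x of a chamber D is seen from n as the vector delta (fst n) D x, and W acts by
   isometries, a point is equatorial iff that vector is orthogonal to snd n.  Hence a whole
   irreducible factor (the points supported on a component) is equatorial iff the vertices
   of one chamber C with types in that component are equatorial.  The theorem follows:
   the face of type T of C lies in the horizontal part iff T consists of horizontal types,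
   i.e. iff every component meeting T has all its vertices in C equatorial. *)

lemma refl_inner:
  assumes "norm a = 1" shows "refl a x \<bullet> refl a y = x \<bullet> y"
proof -
  have "a \<bullet> a = 1" using assms by (simp add: norm_eq_1)
  then show ?thesis unfolding refl_def
    by (simp add: inner_diff_left inner_diff_right algebra_simps inner_commute)
qed

lemma refl_invol:
  assumes "norm a = 1" shows "refl a (refl a x) = x"
proof -
  have "a \<bullet> a = 1" using assms by (simp add: norm_eq_1)
  then show ?thesis unfolding refl_def by (simp add: inner_diff_left algebra_simps)
qed

lemma linear_refl: "linear (refl a)"
  unfolding refl_def by (auto simp: linear_iff inner_add_left algebra_simps scaleR_add_left)

lemma wprod_Nil: "wprod \<alpha> [] = id"
  by (simp add: wprod_def)

lemma wprod_Cons: "wprod \<alpha> (s # ws) = refl (\<alpha> s) \<circ> wprod \<alpha> ws"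
  by (simp add: wprod_def)

lemma wprod_append: "wprod \<alpha> (ws @ vs) = wprod \<alpha> ws \<circ> wprod \<alpha> vs"
  by (induction ws) (auto simp: wprod_def)

lemma linear_wprod: "linear (wprod \<alpha> ws)"
proof (induction ws)
  case Nil show ?case by (simp add: wprod_Nil id_def bounded_linear.linear[OF bounded_linear_ident])
next
  case (Cons s ws) show ?case unfolding wprod_Cons by (rule linear_compose[OF Cons linear_refl])
qed

lemma wprod_inner:
  assumes "\<forall>s. norm (\<alpha> s) = 1"
  shows "wprod \<alpha> ws x \<bullet> wprod \<alpha> ws y = x \<bullet> y"
  using assms by (induction ws) (auto simp: wprod_Nil wprod_Cons refl_inner)

lemma wprod_norm:
  assumes "\<forall>s. norm (\<alpha> s) = 1"
  shows "norm (wprod \<alpha> ws x) = norm x"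
  using wprod_inner[OF assms, of ws x x] by (simp add: norm_eq_sqrt_inner)

lemma wprod_rev:
  assumes "\<forall>s. norm (\<alpha> s) = 1"
  shows "wprod \<alpha> ws (wprod \<alpha> (rev ws) x) = x"
  using assms by (induction ws arbitrary: x) (simp_all add: wprod_Nil wprod_Cons wprod_append refl_invol)

lemma building_delta_word:
  assumes "is_W_building \<alpha> \<delta>"
  obtains ws where "\<delta> C D = wprod \<alpha> ws"
proof -
  have "\<delta> C D \<in> range (wprod \<alpha>)" using assms by (simp add: is_W_building_def Wgrp_def)
  then show thesis using that by blast
qed

section \<open>Fundamental weights\<close>

lemma perp_roots_zero:
  fixes z :: "real^'n::finite"
  assumes "coxeter_roots \<alpha> m" "\<forall>t. z \<bullet> \<alpha> t = 0"
  shows "z = 0"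
proof -
  have "orthogonal z z"
    by (rule orthogonal_to_span) (use assms in \<open>auto simp: orthogonal_def coxeter_roots_def\<close>)
  then show ?thesis by (simp add: orthogonal_def)
qed

text \<open>Existence of the vertex of type v of K: normalise the component of alpha v orthogonal
  to the other roots, which is nonzero by linear independence.\<close>

lemma weight_exists:
  fixes \<alpha> :: "'s::finite \<Rightarrow> real^'n::finite"
  assumes "coxeter_roots \<alpha> m"
  shows "\<exists>x. fund \<alpha> x \<and> (\<forall>t. t \<noteq> v \<longrightarrow> x \<bullet> \<alpha> t = 0)"
proof -
  let ?S = "\<alpha> ` (UNIV - {v})"
  obtain y z where y: "y \<in> span ?S" and z: "\<And>w. w \<in> span ?S \<Longrightarrow> orthogonal z w"
      and split: "\<alpha> v = y + z"
    using orthogonal_subspace_decomp_exists[of ?S "\<alpha> v"] by blast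
  have "inj \<alpha>" and ind: "independent (range \<alpha>)"
    using assms by (auto simp: coxeter_roots_def)
  then have others: "range \<alpha> - {\<alpha> v} = ?S" by (auto simp: inj_eq)
  have "z \<noteq> 0"
  proof
    assume "z = 0"
    then have "\<alpha> v \<in> span (range \<alpha> - {\<alpha> v})" using y split others by simp
    then show False using ind by (auto simp: dependent_def)
  qed
  have z_other: "z \<bullet> \<alpha> t = 0" if "t \<noteq> v" for t
    using z[of "\<alpha> t"] that by (auto simp: orthogonal_def intro: span_base)
  have "z \<bullet> y = 0" using z[OF y] by (simp add: orthogonal_def)
  then have z_v: "z \<bullet> \<alpha> v = z \<bullet> z" by (simp add: split inner_add_right)
  let ?x = "(1 / norm z) *\<^sub>R z"
  have "0 \<le> z \<bullet> \<alpha> s" for s using z_other[of s] z_v by (cases "s = v") auto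
  then have "fund \<alpha> ?x" using \<open>z \<noteq> 0\<close> by (simp add: fund_def)
  moreover have "\<forall>t. t \<noteq> v \<longrightarrow> ?x \<bullet> \<alpha> t = 0" using z_other by simp
  ultimately show ?thesis by blast
qed

lemma weight_pos:
  fixes \<alpha> :: "'s::finite \<Rightarrow> real^'n::finite"
  assumes "coxeter_roots \<alpha> m" "fund \<alpha> x" "\<forall>t. t \<noteq> v \<longrightarrow> x \<bullet> \<alpha> t = 0"
  shows "x \<bullet> \<alpha> v > 0"
proof (rule ccontr)
  assume "\<not> ?thesis"
  then have "x \<bullet> \<alpha> v = 0" using assms(2) unfolding fund_def by (meson antisym not_less)
  then have "x = 0" using assms(1,3) perp_roots_zero by metis
  then show False using assms(2) by (simp add: fund_def)
qed

text \<open>Uniqueness: two such vectors are proportional (their suitable combination is orthogonal to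
  all roots) and both have norm 1 and positive pairing with alpha v.\<close>

lemma weight_unique:
  fixes \<alpha> :: "'s::finite \<Rightarrow> real^'n::finite"
  assumes cr: "coxeter_roots \<alpha> m"
    and x: "fund \<alpha> x" "\<forall>t. t \<noteq> v \<longrightarrow> x \<bullet> \<alpha> t = 0"
    and y: "fund \<alpha> y" "\<forall>t. t \<noteq> v \<longrightarrow> y \<bullet> \<alpha> t = 0"
  shows "x = y"
proof -
  define a where "a = x \<bullet> \<alpha> v"
  define b where "b = y \<bullet> \<alpha> v"
  have "a > 0" "b > 0" using weight_pos[OF cr x] weight_pos[OF cr y] by (simp_all add: a_def b_def)
  have "(b *\<^sub>R x - a *\<^sub>R y) \<bullet> \<alpha> t = 0" for t
    using x(2) y(2) by (cases "t = v") (auto simp: inner_diff_left a_def b_def)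
  then have "b *\<^sub>R x - a *\<^sub>R y = 0" using perp_roots_zero[OF cr] by blast
  then have scaled_eq: "b *\<^sub>R x = a *\<^sub>R y" by simp
  then have "norm (b *\<^sub>R x) = norm (a *\<^sub>R y)" by simp
  then have "b = a" using \<open>a > 0\<close> \<open>b > 0\<close> x(1) y(1) by (simp add: fund_def)
  then show ?thesis using scaled_eq \<open>b > 0\<close> by simp
qed

definition weight :: "('s \<Rightarrow> real^'n) \<Rightarrow> 's \<Rightarrow> real^'n" where
  "weight \<alpha> v = (THE x. fund \<alpha> x \<and> (\<forall>t. t \<noteq> v \<longrightarrow> x \<bullet> \<alpha> t = 0))"

lemma weight:
  fixes \<alpha> :: "'s::finite \<Rightarrow> real^'n::finite"
  assumes cr: "coxeter_roots \<alpha> m"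
  shows weight_fund: "fund \<alpha> (weight \<alpha> v)"
    and weight_other: "\<And>t. t \<noteq> v \<Longrightarrow> weight \<alpha> v \<bullet> \<alpha> t = 0"
    and weight_own: "weight \<alpha> v \<bullet> \<alpha> v > 0"
proof -
  have "\<exists>!x. fund \<alpha> x \<and> (\<forall>t. t \<noteq> v \<longrightarrow> x \<bullet> \<alpha> t = 0)"
    using weight_exists[OF cr, of v] weight_unique[OF cr] by blast
  then have P: "fund \<alpha> (weight \<alpha> v) \<and> (\<forall>t. t \<noteq> v \<longrightarrow> weight \<alpha> v \<bullet> \<alpha> t = 0)"
    unfolding weight_def by (rule theI')
  then show "fund \<alpha> (weight \<alpha> v)" "\<And>t. t \<noteq> v \<Longrightarrow> weight \<alpha> v \<bullet> \<alpha> t = 0" by auto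
  show "weight \<alpha> v \<bullet> \<alpha> v > 0" using weight_pos[OF cr] P by blast
qed

lemma vertex_weight: "vertex \<alpha> C v = (C, weight \<alpha> v)"
  by (simp add: vertex_def weight_def)

lemma weight_expansion:
  fixes \<alpha> :: "'s::finite \<Rightarrow> real^'n::finite"
  assumes cr: "coxeter_roots \<alpha> m" and z: "\<forall>t. t \<notin> J \<longrightarrow> z \<bullet> \<alpha> t = 0"
  shows "z = (\<Sum>v\<in>J. (z \<bullet> \<alpha> v / (weight \<alpha> v \<bullet> \<alpha> v)) *\<^sub>R weight \<alpha> v)"
proof -
  let ?s = "\<Sum>v\<in>J. (z \<bullet> \<alpha> v / (weight \<alpha> v \<bullet> \<alpha> v)) *\<^sub>R weight \<alpha> v"
  have "(z - ?s) \<bullet> \<alpha> t = 0" for t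
  proof -
    have "?s \<bullet> \<alpha> t = (\<Sum>v\<in>J. (z \<bullet> \<alpha> v / (weight \<alpha> v \<bullet> \<alpha> v)) * (weight \<alpha> v \<bullet> \<alpha> t))"
      by (simp add: inner_sum_left)
    also have "\<dots> = (\<Sum>v\<in>J. if v = t then z \<bullet> \<alpha> t else 0)"
      using weight_other[OF cr] weight_own[OF cr] by (intro sum.cong) (auto simp: less_imp_neq[symmetric])
    also have "\<dots> = z \<bullet> \<alpha> t" using z by (simp add: sum.delta')
    finally show ?thesis by (simp add: inner_diff_left)
  qed
  then show ?thesis using perp_roots_zero[OF cr, of "z - ?s"] by simp
qed

section \<open>Components of the Coxeter diagram\<close>

lemma cox_path_sym:
  assumes "coxeter_roots \<alpha> m" "cox_path m a b" shows "cox_path m b a"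
  using assms(2) unfolding cox_path_def
proof (induction rule: rtranclp_induct)
  case base then show ?case by simp
next
  case (step y z)
  then have "cox_edge m z y" using assms(1) by (auto simp: cox_edge_def coxeter_roots_def)
  then show ?case using step(3) by (rule converse_rtranclp_into_rtranclp)
qed

lemma cox_path_trans: "cox_path m a b \<Longrightarrow> cox_path m b c \<Longrightarrow> cox_path m a c"
  unfolding cox_path_def by (rule rtranclp_trans)

text \<open>Types not joined by an edge have m = 2, so roots in distinct components are orthogonal.\<close>

lemma component_roots_orth:
  assumes cr: "coxeter_roots \<alpha> m" and "cox_path m r s" "\<not> cox_path m r t"
  shows "\<alpha> s \<bullet> \<alpha> t = 0"
proof -
  have "s \<noteq> t" using assms by auto
  have "\<not> cox_edge m s t"
    using assms(2,3) unfolding cox_path_def by (meson rtranclp.rtrancl_into_rtrancl)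
  then have "m s t = 2" using \<open>s \<noteq> t\<close> cr by (auto simp: cox_edge_def coxeter_roots_def)
    (metis le_antisym not_less_eq_eq numeral_2_eq_2 numeral_3_eq_3)
  then show ?thesis using cr by (simp add: coxeter_roots_def)
qed

lemma wprod_preserves_support:
  assumes orth: "\<And>s t. s \<in> J \<Longrightarrow> t \<notin> J \<Longrightarrow> \<alpha> s \<bullet> \<alpha> t = 0"
    and z: "\<forall>t. t \<notin> J \<longrightarrow> z \<bullet> \<alpha> t = 0"
  shows "\<forall>t. t \<notin> J \<longrightarrow> wprod \<alpha> ws z \<bullet> \<alpha> t = 0"
proof (induction ws)
  case Nil then show ?case using z by (simp add: wprod_Nil)
next
  case (Cons s ws)
  have "wprod \<alpha> ws z \<bullet> \<alpha> s * (\<alpha> s \<bullet> \<alpha> t) = 0" if "t \<notin> J" for t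
    using Cons orth[of s t] that by (cases "s \<in> J") auto
  then show ?case using Cons by (simp add: wprod_Cons refl_def inner_diff_left)
qed

section \<open>Equatorial points\<close>

text \<open>Angles lie in [0, pi], so a point is equatorial iff its representing unit vector, seen
  from the chamber of n, is orthogonal to n.\<close>

lemma equatorial_iff_orth:
  fixes \<alpha> :: "'s::finite \<Rightarrow> real^'n::finite"
  assumes cr: "coxeter_roots \<alpha> m" and W: "is_W_building \<alpha> \<delta>"
    and n: "fund \<alpha> (snd n)" and y: "fund \<alpha> y"
  shows "equatorial \<delta> n (D, y) \<longleftrightarrow> snd n \<bullet> \<delta> (fst n) D y = 0"
proof -
  obtain ws where ws: "\<delta> (fst n) D = wprod \<alpha> ws" using building_delta_word[OF W] .
  let ?c = "snd n \<bullet> \<delta> (fst n) D y"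
  have "\<bar>?c\<bar> \<le> norm (snd n) * norm (\<delta> (fst n) D y)" by (rule Cauchy_Schwarz_ineq2)
  also have "\<dots> = 1"
    using n y ws wprod_norm[of \<alpha>] cr by (simp add: fund_def coxeter_roots_def)
  finally have "-1 \<le> ?c" "?c \<le> 1" by auto
  moreover have "arccos ?c = pi / 2 \<Longrightarrow> cos (arccos ?c) = 0" by (metis cos_pi_half)
  ultimately show ?thesis by (auto simp: equatorial_def angd_def)
qed

text \<open>If the vertices of one chamber C with types in J are equatorial, then so is every point
  supported on J, in any chamber D: transport it into C by W and expand it in weights.\<close>

lemma part_equatorial_from_vertices:
  fixes \<alpha> :: "'s::finite \<Rightarrow> real^'n::finite"
    and \<delta> :: "'c \<Rightarrow> 'c \<Rightarrow> (real^'n \<Rightarrow> real^'n)"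
  assumes cr: "coxeter_roots \<alpha> m" and W: "is_W_building \<alpha> \<delta>" and n: "fund \<alpha> (snd n)"
    and orth: "\<And>s t. s \<in> J \<Longrightarrow> t \<notin> J \<Longrightarrow> \<alpha> s \<bullet> \<alpha> t = 0"
    and vertices: "\<forall>v\<in>J. equatorial \<delta> n (vertex \<alpha> C v)"
    and p: "p \<in> (part_pts \<alpha> J :: ('c \<times> (real^'n)) set)"
  shows "equatorial \<delta> n p"
proof -
  have unit: "\<forall>s. norm (\<alpha> s) = 1" using cr by (simp add: coxeter_roots_def)
  obtain ws where ws: "\<delta> (fst n) C = wprod \<alpha> ws" using building_delta_word[OF W] .
  have weight_orth: "snd n \<bullet> wprod \<alpha> ws (weight \<alpha> v) = 0" if "v \<in> J" for v
    using vertices that equatorial_iff_orth[OF cr W n weight_fund[OF cr]] ws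
    by (simp add: vertex_weight)
  have supported_orth: "snd n \<bullet> wprod \<alpha> ws z = 0" if z: "\<forall>t. t \<notin> J \<longrightarrow> z \<bullet> \<alpha> t = 0" for z
  proof -
    have "wprod \<alpha> ws z
        = (\<Sum>v\<in>J. (z \<bullet> \<alpha> v / (weight \<alpha> v \<bullet> \<alpha> v)) *\<^sub>R wprod \<alpha> ws (weight \<alpha> v))"
      by (subst weight_expansion[OF cr z])
        (simp add: linear_sum[OF linear_wprod] linear_scale[OF linear_wprod] o_def)
    then show ?thesis using weight_orth by (simp add: inner_sum_right)
  qed
  obtain D y where pDy: "p = (D, y)" and y: "fund \<alpha> y" "\<forall>t. t \<notin> J \<longrightarrow> y \<bullet> \<alpha> t = 0"
    using p by (auto simp: part_pts_def)
  obtain ws' where ws': "\<delta> (fst n) D = wprod \<alpha> ws'" using building_delta_word[OF W] .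
  let ?z = "wprod \<alpha> (rev ws) (wprod \<alpha> ws' y)"
  have "\<forall>t. t \<notin> J \<longrightarrow> ?z \<bullet> \<alpha> t = 0"
    by (intro wprod_preserves_support[OF orth] y(2))
  then have "snd n \<bullet> wprod \<alpha> ws ?z = 0" by (rule supported_orth)
  then have "snd n \<bullet> \<delta> (fst n) D y = 0" using wprod_rev[OF unit] ws' by simp
  then show ?thesis using equatorial_iff_orth[OF cr W n y(1)] pDy by simp
qed

lemma component_equatorial_iff:
  fixes \<alpha> :: "'s::finite \<Rightarrow> real^'n::finite"
    and \<delta> :: "'c \<Rightarrow> 'c \<Rightarrow> (real^'n \<Rightarrow> real^'n)"
  assumes cr: "coxeter_roots \<alpha> m" and W: "is_W_building \<alpha> \<delta>" and n: "fund \<alpha> (snd n)"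
  shows "(\<forall>p \<in> (part_pts \<alpha> {u. cox_path m r u} :: ('c \<times> (real^'n)) set). equatorial \<delta> n p)
     \<longleftrightarrow> (\<forall>v. cox_path m r v \<longrightarrow> equatorial \<delta> n (vertex \<alpha> C v))"
proof
  assume "\<forall>p \<in> (part_pts \<alpha> {u. cox_path m r u} :: ('c \<times> (real^'n)) set). equatorial \<delta> n p"
  moreover have "vertex \<alpha> C v \<in> part_pts \<alpha> {u. cox_path m r u}" if "cox_path m r v" for v
  proof -
    have "\<forall>t. t \<notin> {u. cox_path m r u} \<longrightarrow> weight \<alpha> v \<bullet> \<alpha> t = 0"
      using weight_other[OF cr, where v=v] that by (metis mem_Collect_eq)
    then show ?thesis using weight_fund[OF cr] by (simp add: part_pts_def vertex_weight)
  qed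
  ultimately show "\<forall>v. cox_path m r v \<longrightarrow> equatorial \<delta> n (vertex \<alpha> C v)" by blast
next
  assume "\<forall>v. cox_path m r v \<longrightarrow> equatorial \<delta> n (vertex \<alpha> C v)"
  then have "\<forall>v\<in>{u. cox_path m r u}. equatorial \<delta> n (vertex \<alpha> C v)" by simp
  moreover have "\<alpha> s \<bullet> \<alpha> t = 0" if "s \<in> {u. cox_path m r u}" "t \<notin> {u. cox_path m r u}" for s t
    using component_roots_orth[OF cr] that by simp
  ultimately show "\<forall>p \<in> (part_pts \<alpha> {u. cox_path m r u} :: ('c \<times> (real^'n)) set). equatorial \<delta> n p"
    using part_equatorial_from_vertices[OF cr W n] by blast
qed

text \<open>A type is horizontal iff the factor of its own component is equatorial (components of
  the symmetric diagram relation coincide for connected types).\<close>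

lemma horiz_types_iff:
  fixes \<alpha> :: "'s::finite \<Rightarrow> real^'n::finite"
    and \<delta> :: "'c \<Rightarrow> 'c \<Rightarrow> (real^'n \<Rightarrow> real^'n)"
  assumes cr: "coxeter_roots \<alpha> m"
  shows "t \<in> horiz_types \<alpha> m \<delta> n \<longleftrightarrow>
    (\<forall>p \<in> (part_pts \<alpha> {u. cox_path m t u} :: ('c \<times> (real^'n)) set). equatorial \<delta> n p)"
proof -
  let ?eq = "\<lambda>J. \<forall>p \<in> (part_pts \<alpha> J :: ('c \<times> (real^'n)) set). equatorial \<delta> n p"
  have same_component: "{u. cox_path m s u} = {u. cox_path m t u}" if "cox_path m s t" for s
  proof -
    have "cox_path m s u \<longleftrightarrow> cox_path m t u" for u
      using that cox_path_trans cox_path_sym[OF cr] by metis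
    then show ?thesis by simp
  qed
  have "t \<in> horiz_types \<alpha> m \<delta> n \<longleftrightarrow> (\<exists>s. cox_path m s t \<and> ?eq {u. cox_path m s u})"
    unfolding horiz_types_def by blast
  also have "\<dots> \<longleftrightarrow> ?eq {u. cox_path m t u}"
    using same_component by (metis cox_path_def rtranclp.rtrancl_refl)
  finally show ?thesis .
qed

text \<open>A face of type T lies in the subcomplex of types J iff T is contained in J: the vertex
  of type t in T has a nonzero coordinate at t.\<close>

lemma face_in_part_iff:
  fixes \<alpha> :: "'s::finite \<Rightarrow> real^'n::finite"
  assumes cr: "coxeter_roots \<alpha> m"
  shows "face_pts \<alpha> C T \<subseteq> part_pts \<alpha> J \<longleftrightarrow> T \<subseteq> J"
proof
  assume face: "face_pts \<alpha> C T \<subseteq> part_pts \<alpha> J"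
  show "T \<subseteq> J"
  proof
    fix t assume "t \<in> T"
    then have "\<forall>u. u \<notin> T \<longrightarrow> weight \<alpha> t \<bullet> \<alpha> u = 0"
      using weight_other[OF cr, where v=t] by metis
    then have "(C, weight \<alpha> t) \<in> face_pts \<alpha> C T"
      using weight_fund[OF cr] by (simp add: face_pts_def)
    then have "(C, weight \<alpha> t) \<in> part_pts \<alpha> J" using face by blast
    then show "t \<in> J" using weight_own[OF cr, of t] by (auto simp: part_pts_def)
  qed
qed (auto simp: face_pts_def part_pts_def)

theorem mainTheorem7:
  fixes \<alpha> :: "'s::finite \<Rightarrow> real^'n::finite"
    and m :: "'s \<Rightarrow> 's \<Rightarrow> nat"
    and \<delta> :: "'c \<Rightarrow> 'c \<Rightarrow> (real^'n \<Rightarrow> real^'n)"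
    and n :: "'c \<times> (real^'n)"
    and C :: 'c
    and T :: "'s set"
  assumes "coxeter_roots \<alpha> m"
    and "is_W_building \<alpha> \<delta>"
    and "thick \<alpha> \<delta>"
    and "fund \<alpha> (snd n)"
  shows "face_pts \<alpha> C T \<subseteq> horizontal_part \<alpha> m \<delta> n \<longleftrightarrow>
         (\<forall>v. (\<exists>t\<in>T. cox_path m v t) \<longrightarrow> equatorial \<delta> n (vertex \<alpha> C v))"
proof -
  note cr = assms(1)
  have "face_pts \<alpha> C T \<subseteq> horizontal_part \<alpha> m \<delta> n \<longleftrightarrow> T \<subseteq> horiz_types \<alpha> m \<delta> n"
    unfolding horizontal_part_def by (rule face_in_part_iff[OF cr])
  also have "\<dots> \<longleftrightarrow> (\<forall>t\<in>T. \<forall>v. cox_path m t v \<longrightarrow> equatorial \<delta> n (vertex \<alpha> C v))"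
    using horiz_types_iff[OF cr] component_equatorial_iff[OF cr assms(2,4)] by blast
  also have "\<dots> \<longleftrightarrow> (\<forall>v. (\<exists>t\<in>T. cox_path m v t) \<longrightarrow> equatorial \<delta> n (vertex \<alpha> C v))"
    using cox_path_sym[OF cr] by blast
  finally show ?thesis .
qed

end
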